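(* Let $A\in\mathbb{R}^{n\times m}$ have distinct columns with $a_1=0$, suppose the extreme points of $\mathrm{New}(A)$ are affinely independent, and let $c\in\mathbb{R}^m$ satisfy $c_i\le 0$ for every nonzero nonextremal $a_i$. Let $f=\mathrm{Sig}(A,c)$. Then either $f_{\mathsf{SAGE}}=f^\star$, or $f_{\mathsf{SAGE}}<f^\star<c_1$.
   Context: Let $A\in\mathbb{R}^{n\times m}$ have distinct columns $a_1,\dots,a_m$. For $c\in\mathbb{R}^m$, $\mathrm{Sig}(A,c)$ denotes the function $x\mapsto\sum_{i=1}^m c_i\exp(a_i^\top x)$ on $\mathbb{R}^n$. $\mathrm{New}(A)=\mathrm{conv}\{a_1,\dots,a_m\}$; $a_i$ is extremal if it is an extreme point of $\mathrm{New}(A)$ and nonextremal otherwise. $C_{\mathrm{NNS}}(A)=\{c:\mathrm{Sig}(A,c)(x)\ge 0\ \forall x\}$, $C_{\mathrm{AGE}}(A,k)=\{c\in C_{\mathrm{NNS}}(A): c_i\ge 0\ \forall i\ne k\}$, $C_{\mathrm{SAGE}}(A)=\sum_{k=1}^m C_{\mathrm{AGE}}(A,k)$. For $f=\mathrm{Sig}(A,c)$ with $a_1=0$: $f^\star=\inf_{x\in\mathbb{R}^n}f(x)$ and $f_{\mathsf{SAGE}}=\sup\{\gamma\in\mathbb{R}: c-\gamma e_1\in C_{\mathrm{SAGE}}(A)\}$ (with $\sup\emptyset=-\infty$). *)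

theory Defs
  imports "HOL-Analysis.Analysis" "HOL-Library.Extended_Real"
begin

text \<open>Exponent matrix A is given by its columns: A :: 'm \<Rightarrow> real^'n, with the
  finite type 'm indexing the columns 1..m. A coefficient vector is c :: 'm \<Rightarrow> real.\<close>

definition Sig :: "('m::finite \<Rightarrow> real^'n) \<Rightarrow> ('m \<Rightarrow> real) \<Rightarrow> real^'n \<Rightarrow> real" where
  "Sig A c x = (\<Sum>i\<in>UNIV. c i * exp (A i \<bullet> x))"

definition New :: "('m::finite \<Rightarrow> real^'n) \<Rightarrow> (real^'n) set" where
  "New A = convex hull (range A)"

definition extremal :: "('m::finite \<Rightarrow> real^'n) \<Rightarrow> 'm \<Rightarrow> bool" where
  "extremal A i \<longleftrightarrow> A i extreme_point_of New A"

definition C_NNS :: "('m::finite \<Rightarrow> real^'n) \<Rightarrow> ('m \<Rightarrow> real) set" where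
  "C_NNS A = {c. \<forall>x. Sig A c x \<ge> 0}"

definition C_AGE :: "('m::finite \<Rightarrow> real^'n) \<Rightarrow> 'm \<Rightarrow> ('m \<Rightarrow> real) set" where
  "C_AGE A k = {c \<in> C_NNS A. \<forall>i. i \<noteq> k \<longrightarrow> c i \<ge> 0}"

definition C_SAGE :: "('m::finite \<Rightarrow> real^'n) \<Rightarrow> ('m \<Rightarrow> real) set" where
  "C_SAGE A = {c. \<exists>g :: 'm \<Rightarrow> 'm \<Rightarrow> real. (\<forall>k. g k \<in> C_AGE A k) \<and> (\<forall>i. c i = (\<Sum>k\<in>UNIV. g k i))}"

definition f_star :: "('m::finite \<Rightarrow> real^'n) \<Rightarrow> ('m \<Rightarrow> real) \<Rightarrow> ereal" where
  "f_star A c = (INF x. ereal (Sig A c x))"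

text \<open>f_SAGE with distinguished index i1 (the column a_1 = 0); sup of empty set is -\<infinity>.\<close>
definition f_SAGE :: "('m::finite \<Rightarrow> real^'n) \<Rightarrow> 'm \<Rightarrow> ('m \<Rightarrow> real) \<Rightarrow> ereal" where
  "f_SAGE A i1 c = Sup {ereal \<gamma> | \<gamma>. (\<lambda>i. c i - \<gamma> * (if i = i1 then 1 else 0)) \<in> C_SAGE A}"

end

theory Submission
  imports Defs
begin

(* Always f_SAGE <= f*, so only the case f* >= c_1 needs work. There h = c - f* e_1 is a
   nonnegative signomial whose nonextremal coefficients are all nonpositive, and we show that h
   is SAGE. Let E be the extremal indices and lam_i the barycentric coordinates of a nonextremal
   a_i with respect to them. Affine independence lets us prescribe a_j . x on E freely up to a
   common shift, so nonnegativity of h amounts to nonnegativity of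
     K(s) = sum_{j in E} h_j exp(s_j) + sum_{i notin E} h_i exp(lam_i . s).
   The coercive function K(s) + eps * sum_j exp(s_j) - sum_j s_j has a minimiser; its
   stationarity equations split every h_j, up to eps, into amounts V_ij >= 0 for which each
   h_i exp(a_i . x) + sum_j V_ij exp(a_j . x) is nonnegative by AM-GM. Letting eps -> 0 along a
   convergent subsequence gives an AGE decomposition of h. *)

lemma exists_affine_interpolation:
  fixes A :: "'i \<Rightarrow> 'a::euclidean_space"
  assumes inj: "inj_on A E" and indep: "\<not> affine_dependent (A ` E)"
  shows "\<exists>x t. \<forall>j\<in>E. A j \<bullet> x = s j + t"
proof (cases "E = {}")
  case False
  then obtain j0 where j0: "j0 \<in> E" by blast
  define B where "B = (\<lambda>y. - A j0 + y) ` A ` (E - {j0})"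
  have "A j0 \<notin> A ` (E - {j0})" using inj j0 by (auto simp: inj_on_def)
  moreover have "insert (A j0) (A ` (E - {j0})) = A ` E" using j0 by auto
  ultimately have "\<not> dependent B"
    using indep affine_dependent_iff_dependent unfolding B_def by metis
  then obtain g where g: "linear g" "\<forall>y\<in>B. g y = s (inv_into E A (y + A j0)) - s j0"
    using real_vector.linear_independent_extend[of B "\<lambda>y. s (inv_into E A (y + A j0)) - s j0"] by blast
  define x where "x = adjoint g 1"
  have gx: "y \<bullet> x = g y" for y unfolding x_def using adjoint_works[OF g(1)] by simp
  have "A j \<bullet> x = s j + (A j0 \<bullet> x - s j0)" if j: "j \<in> E" for j
  proof (cases "j = j0")
    case False
    then have "- A j0 + A j \<in> B" unfolding B_def using j by auto
    then have "(- A j0 + A j) \<bullet> x = s j - s j0" using g(2) gx inv_into_f_f[OF inj j] by simp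
    then show ?thesis by (simp add: inner_diff_left algebra_simps)
  qed simp
  then show ?thesis by blast
qed simp

lemma New_eq_convex_hull_extremal: "New A = convex hull (A ` {i. extremal A i})"
proof -
  have "compact (New A)" "convex (New A)"
    unfolding New_def by (auto intro: finite_imp_compact_convex_hull)
  then have "New A = convex hull {x. x extreme_point_of New A}"
    by (rule Krein_Milman_Minkowski)
  moreover have "{x. x extreme_point_of New A} = A ` {i. extremal A i}"
    using extreme_point_of_convex_hull unfolding extremal_def New_def by fastforce
  ultimately show ?thesis by simp
qed

lemma barycentric_coordinates_extremal:
  fixes A :: "'i::finite \<Rightarrow> real^'n"
  assumes "inj A"
  obtains lam where "\<And>i j. extremal A j \<Longrightarrow> 0 \<le> lam i j"
    and "\<And>i. sum (lam i) {j. extremal A j} = 1"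
    and "\<And>i. A i = (\<Sum>j | extremal A j. lam i j *\<^sub>R A j)"
proof -
  let ?E = "{j. extremal A j}"
  have inj: "inj_on A ?E" using assms by (simp add: inj_on_def inj_def)
  have "\<exists>l. (\<forall>j\<in>?E. 0 \<le> l j) \<and> sum l ?E = 1 \<and> A i = (\<Sum>j\<in>?E. l j *\<^sub>R A j)" for i
  proof -
    have "A i \<in> New A" unfolding New_def by (simp add: hull_inc)
    then have "A i \<in> convex hull (A ` ?E)" by (simp add: New_eq_convex_hull_extremal)
    then obtain u where u: "\<forall>y\<in>A ` ?E. 0 \<le> u y" "sum u (A ` ?E) = 1" "(\<Sum>y\<in>A ` ?E. u y *\<^sub>R y) = A i"
      by (auto simp: convex_hull_finite)
    moreover have "sum u (A ` ?E) = (\<Sum>j\<in>?E. u (A j))"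
      and "(\<Sum>y\<in>A ` ?E. u y *\<^sub>R y) = (\<Sum>j\<in>?E. u (A j) *\<^sub>R A j)"
      by (rule sum.reindex[OF inj, unfolded comp_def])+
    ultimately show ?thesis by (intro exI[of _ "u \<circ> A"]) auto
  qed
  then obtain lam where "\<forall>i. (\<forall>j\<in>?E. 0 \<le> lam i j) \<and> sum (lam i) ?E = 1 \<and> A i = (\<Sum>j\<in>?E. lam i j *\<^sub>R A j)"
    by metis
  then show ?thesis using that by blast
qed

(* s stands for the values A j . x on the extremal indices E (up to a common shift), and lam i
   for the barycentric coordinates of A i with respect to A ` E. *)
definition reduced_sig :: "'i set \<Rightarrow> ('i \<Rightarrow> 'i \<Rightarrow> real) \<Rightarrow> ('i \<Rightarrow> real) \<Rightarrow> ('i \<Rightarrow> real) \<Rightarrow> real"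
  where "reduced_sig E lam h s =
    (\<Sum>j\<in>E. h j * exp (s j)) + (\<Sum>i\<in>-E. h i * exp (\<Sum>j\<in>E. lam i j * s j))"

lemma Sig_eq_exp_mult_reduced_sig:
  fixes A :: "'i::finite \<Rightarrow> real^'n"
  assumes xt: "\<And>j. j \<in> E \<Longrightarrow> A j \<bullet> x = s j + t"
    and bary: "\<And>i. i \<notin> E \<Longrightarrow> sum (lam i) E = 1 \<and> A i = (\<Sum>j\<in>E. lam i j *\<^sub>R A j)"
  shows "Sig A h x = exp t * reduced_sig E lam h s"
proof -
  have nonextremal: "A i \<bullet> x = (\<Sum>j\<in>E. lam i j * s j) + t" if "i \<notin> E" for i
  proof -
    have "A i \<bullet> x = (\<Sum>j\<in>E. lam i j * (s j + t))"
      using bary[OF that] xt by (simp add: inner_sum_left)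
    also have "\<dots> = (\<Sum>j\<in>E. lam i j * s j) + (\<Sum>j\<in>E. lam i j) * t"
      by (simp add: distrib_left sum.distrib sum_distrib_right)
    finally show ?thesis using bary[OF that] by simp
  qed
  have "Sig A h x = (\<Sum>i\<in>-E. h i * exp (A i \<bullet> x)) + (\<Sum>j\<in>E. h j * exp (A j \<bullet> x))"
    unfolding Sig_def Compl_eq_Diff_UNIV by (rule sum.subset_diff) auto
  also have "\<dots> = exp t * reduced_sig E lam h s"
    unfolding reduced_sig_def by (simp add: xt nonextremal exp_add sum_distrib_left algebra_simps)
  finally show ?thesis .
qed

lemma reduced_sig_nonneg:
  fixes A :: "'i::finite \<Rightarrow> real^'n"
  assumes "\<And>s. \<exists>x t. \<forall>j\<in>E. A j \<bullet> x = s j + t"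
    and "\<And>i. i \<notin> E \<Longrightarrow> sum (lam i) E = 1 \<and> A i = (\<Sum>j\<in>E. lam i j *\<^sub>R A j)"
    and "\<And>x. 0 \<le> Sig A h x"
  shows "0 \<le> reduced_sig E lam h s"
proof -
  obtain x t where "\<forall>j\<in>E. A j \<bullet> x = s j + t" using assms(1) by blast
  then have "Sig A h x = exp t * reduced_sig E lam h s"
    using assms(2) by (intro Sig_eq_exp_mult_reduced_sig) auto
  then show ?thesis using assms(3)[of x] by (simp add: zero_le_mult_iff)
qed

definition perturbed_objective ::
    "'i set \<Rightarrow> ('i \<Rightarrow> 'i \<Rightarrow> real) \<Rightarrow> ('i \<Rightarrow> real) \<Rightarrow> real \<Rightarrow> ('i \<Rightarrow> real) \<Rightarrow> real"
  where "perturbed_objective E lam h \<epsilon> s =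
    reduced_sig E lam h s + \<epsilon> * (\<Sum>j\<in>E. exp (s j)) - (\<Sum>j\<in>E. s j)"

lemma perturbed_objective_cong:
  "(\<And>j. j \<in> E \<Longrightarrow> s j = s' j) \<Longrightarrow> perturbed_objective E lam h \<epsilon> s = perturbed_objective E lam h \<epsilon> s'"
  unfolding perturbed_objective_def reduced_sig_def
  by (auto intro!: sum.cong arg_cong2[where f = "(+)"] arg_cong[where f = exp])

lemma abs_le_if_eps_exp_minus_le:
  fixes \<epsilon> t M :: real
  assumes "\<epsilon> > 0" and "\<epsilon> * exp t - t \<le> M"
  shows "\<bar>t\<bar> \<le> \<bar>M\<bar> + 2 * (\<bar>M\<bar> + 1) / \<epsilon> + 1"
proof -
  have "- \<bar>M\<bar> \<le> t" using assms by (smt (verit) exp_gt_zero mult_pos_pos)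
  moreover have "t \<le> 2 * (\<bar>M\<bar> + 1) / \<epsilon> + 1"
  proof (rule ccontr)
    assume "\<not> ?thesis"
    then have t: "t > 2 * (\<bar>M\<bar> + 1) / \<epsilon> + 1" by simp
    have t1: "1 \<le> t" using t assms(1) by (smt (verit) divide_nonneg_pos)
    have "t\<^sup>2 / 2 \<le> exp t" using exp_lower_Taylor_quadratic[of t] t1 by (smt (verit) zero_le_power2)
    then have "\<epsilon> * t\<^sup>2 / 2 \<le> \<epsilon> * exp t" using assms(1) by (simp add: field_simps)
    moreover have "2 * (\<bar>M\<bar> + 1) < \<epsilon> * t" using t assms(1)
      by (smt (verit, ccfv_SIG) divide_less_eq mult.commute)
    then have "(\<bar>M\<bar> + 1) * t < \<epsilon> * t\<^sup>2 / 2" using t1 by (simp add: power2_eq_square)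
    moreover have "\<bar>M\<bar> \<le> \<bar>M\<bar> * t" using t1 by (simp add: mult_le_cancel_left1)
    ultimately show False using assms(2) by (simp add: algebra_simps)
  qed
  moreover have "0 \<le> 2 * (\<bar>M\<bar> + 1) / \<epsilon>" using assms(1) by simp
  ultimately show ?thesis by linarith
qed

lemma perturbed_objective_coercive:
  assumes "\<And>s. 0 \<le> reduced_sig E lam h s" and "\<epsilon> > 0" and "k \<in> E" and "finite E"
  shows "\<epsilon> * exp (s k) - s k \<le> perturbed_objective E lam h \<epsilon> s - (real (card E) - 1) * (1 + ln \<epsilon>)"
proof -
  let ?m = "1 + ln \<epsilon>"
  have term_bound: "?m \<le> \<epsilon> * exp t - t" for t
    using exp_ge_add_one_self[of "t + ln \<epsilon>"] \<open>\<epsilon> > 0\<close> by (simp add: exp_add mult.commute)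
  have "\<epsilon> * exp (s k) - s k - ?m \<le> (\<Sum>j\<in>E. \<epsilon> * exp (s j) - s j - ?m)"
    by (rule member_le_sum) (use term_bound assms in auto)
  also have "\<dots> = \<epsilon> * (\<Sum>j\<in>E. exp (s j)) - (\<Sum>j\<in>E. s j) - real (card E) * ?m"
    by (simp add: sum_subtractf sum_distrib_left)
  also have "\<dots> \<le> perturbed_objective E lam h \<epsilon> s - real (card E) * ?m"
    using assms(1)[of s] unfolding perturbed_objective_def by simp
  finally show ?thesis by (simp add: algebra_simps)
qed

lemma perturbed_objective_attains_min:
  fixes E :: "'i::finite set"
  assumes reduced_nonneg: "\<And>s. 0 \<le> reduced_sig E lam h s" and "\<epsilon> > 0"
  shows "\<exists>s. \<forall>s'. perturbed_objective E lam h \<epsilon> s \<le> perturbed_objective E lam h \<epsilon> s'"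
proof -
  define P where "P v = perturbed_objective E lam h \<epsilon> (\<lambda>k. v $ k)" for v :: "real^'i"
  define S where "S = {v. P v \<le> P 0} \<inter> {v. \<forall>k. k \<notin> E \<longrightarrow> v $ k = 0}"
  have cont: "continuous_on UNIV P"
    unfolding P_def perturbed_objective_def reduced_sig_def by (intro continuous_intros)
  have "closed S"
    unfolding S_def using closed_Collect_le[OF cont continuous_on_const] closed_substandard_cart
    by (rule closed_Int)
  define M where "M = P 0 - (real (card E) - 1) * (1 + ln \<epsilon>)"
  define B where "B = \<bar>M\<bar> + 2 * (\<bar>M\<bar> + 1) / \<epsilon> + 1"
  have "\<bar>v $ k\<bar> \<le> B" if "v \<in> S" for v k
  proof (cases "k \<in> E")
    case True
    have "\<epsilon> * exp (v $ k) - v $ k \<le> M"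
      using perturbed_objective_coercive[OF reduced_nonneg \<open>\<epsilon> > 0\<close> True, of "\<lambda>k. v $ k"] that
      unfolding S_def M_def P_def by simp
    then show ?thesis unfolding B_def by (rule abs_le_if_eps_exp_minus_le[OF \<open>\<epsilon> > 0\<close>])
  qed (use that \<open>\<epsilon> > 0\<close> in \<open>auto simp: S_def B_def\<close>)
  then have "norm v \<le> real CARD('i) * B" if "v \<in> S" for v
    using order.trans[OF norm_le_l1_cart sum_bounded_above[of UNIV "\<lambda>k. \<bar>v $ k\<bar>" B]] that by simp
  then have "bounded S" by (rule boundedI)
  then have "compact S" using \<open>closed S\<close> by (simp add: compact_eq_bounded_closed)
  moreover have "0 \<in> S" unfolding S_def by simp
  ultimately obtain v where v: "v \<in> S" "\<And>w. w \<in> S \<Longrightarrow> P v \<le> P w"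
    using continuous_attains_inf[of S P] continuous_on_subset[OF cont] by blast
  show ?thesis
  proof (intro exI allI)
    fix s' :: "'i \<Rightarrow> real"
    define w where "w = (\<chi> k. if k \<in> E then s' k else 0)"
    have Pw: "P w = perturbed_objective E lam h \<epsilon> s'"
      unfolding P_def w_def by (rule perturbed_objective_cong) simp
    show "perturbed_objective E lam h \<epsilon> (\<lambda>k. v $ k) \<le> perturbed_objective E lam h \<epsilon> s'"
    proof (cases "P w \<le> P 0")
      case True
      then have "w \<in> S" unfolding S_def w_def by simp
      then show ?thesis using v Pw unfolding P_def by metis
    qed (use v(1) Pw in \<open>auto simp: S_def P_def\<close>)
  qed
qed

lemma if_zero_mult_simps:
  "(a::real) * (if P then b else 0) = (if P then a * b else 0)"
  "(if P then b else 0) * (a::real) = (if P then b * a else 0)"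
  by auto

lemma perturbed_objective_stationary:
  fixes E :: "'i::finite set"
  assumes min: "\<And>s'. perturbed_objective E lam h \<epsilon> s \<le> perturbed_objective E lam h \<epsilon> s'"
    and j: "j \<in> E"
  shows "(h j + \<epsilon>) * exp (s j) + (\<Sum>i\<in>-E. h i * lam i j * exp (\<Sum>k\<in>E. lam i k * s k)) = 1"
proof -
  define e where "e k = (if k = j then 1 else (0::real))" for k
  define D where "D = (h j + \<epsilon>) * exp (s j) + (\<Sum>i\<in>-E. h i * lam i j * exp (\<Sum>k\<in>E. lam i k * s k)) - 1"
  have "((\<lambda>t. perturbed_objective E lam h \<epsilon> (\<lambda>k. s k + t * e k)) has_field_derivative D) (at 0)"
    unfolding perturbed_objective_def reduced_sig_def
    by (rule derivative_eq_intros refl)+ (simp add: D_def e_def if_zero_mult_simps j ac_simps distrib_left)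
  then have "D = 0"
    by (rule DERIV_local_min[OF _ zero_less_one]) (use min in simp)
  then show ?thesis unfolding D_def by simp
qed

(* The nonextremal term i borrows the amount V i j from the coefficient of the extremal term j,
   overdrawing h j by at most \<delta>. *)
definition AGE_cover ::
    "('i::finite \<Rightarrow> real^'n) \<Rightarrow> 'i set \<Rightarrow> ('i \<Rightarrow> real) \<Rightarrow> real \<Rightarrow> ('i \<Rightarrow> 'i \<Rightarrow> real) \<Rightarrow> bool"
  where "AGE_cover A E h \<delta> V \<longleftrightarrow>
    (\<forall>i\<in>-E. \<forall>j\<in>E. 0 \<le> V i j) \<and>
    (\<forall>j\<in>E. (\<Sum>i\<in>-E. V i j) \<le> h j + \<delta>) \<and>
    (\<forall>i\<in>-E. \<forall>x. 0 \<le> h i * exp (A i \<bullet> x) + (\<Sum>j\<in>E. V i j * exp (A j \<bullet> x)))"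

lemma AGE_cover_exists:
  fixes A :: "'i::finite \<Rightarrow> real^'n"
  assumes reduced_nonneg: "\<And>s. 0 \<le> reduced_sig E lam h s" and "\<epsilon> > 0"
    and bary: "\<And>i. i \<notin> E \<Longrightarrow> (\<forall>j\<in>E. 0 \<le> lam i j) \<and> sum (lam i) E = 1 \<and> A i = (\<Sum>j\<in>E. lam i j *\<^sub>R A j)"
    and nonpos: "\<And>i. i \<notin> E \<Longrightarrow> h i \<le> 0"
  shows "\<exists>V. AGE_cover A E h \<epsilon> V"
proof -
  obtain s where min: "\<And>s'. perturbed_objective E lam h \<epsilon> s \<le> perturbed_objective E lam h \<epsilon> s'"
    using perturbed_objective_attains_min[OF reduced_nonneg \<open>\<epsilon> > 0\<close>] by blast
  define L where "L i = (\<Sum>k\<in>E. lam i k * s k)" for i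
  define V where "V i j = - h i * lam i j * exp (L i - s j)" for i j
  have "0 \<le> V i j" if "i \<notin> E" "j \<in> E" for i j
    using bary[of i] nonpos[of i] that unfolding V_def by (auto intro!: mult_nonpos_nonneg)
  moreover have "(\<Sum>i\<in>-E. V i j) \<le> h j + \<epsilon>" if j: "j \<in> E" for j
  proof -
    have "V i j = - (h i * lam i j * exp (L i)) * exp (- s j)" for i
      unfolding V_def by (simp add: exp_diff exp_minus divide_inverse)
    then have "(\<Sum>i\<in>-E. V i j) = - (\<Sum>i\<in>-E. h i * lam i j * exp (L i)) * exp (- s j)"
      by (simp add: sum_distrib_right sum_negf)
    also have "(\<Sum>i\<in>-E. h i * lam i j * exp (L i)) = 1 - (h j + \<epsilon>) * exp (s j)"
      using perturbed_objective_stationary[OF min j] unfolding L_def by linarith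
    also have "- (1 - (h j + \<epsilon>) * exp (s j)) * exp (- s j) = h j + \<epsilon> - exp (- s j)"
      by (simp add: left_diff_distrib mult.assoc exp_minus_inverse)
    finally show ?thesis by simp
  qed
  moreover have "0 \<le> h i * exp (A i \<bullet> x) + (\<Sum>j\<in>E. V i j * exp (A j \<bullet> x))" if i: "i \<notin> E" for i x
  proof -
    have l0: "\<forall>j\<in>E. 0 \<le> lam i j" and l1: "sum (lam i) E = 1" and Ai: "A i = (\<Sum>j\<in>E. lam i j *\<^sub>R A j)"
      using bary[OF i] by auto
    define y where "y j = L i - s j + A j \<bullet> x" for j
    have "(\<Sum>j\<in>E. lam i j * y j) = (\<Sum>j\<in>E. lam i j) * L i - L i + (\<Sum>j\<in>E. lam i j * (A j \<bullet> x))"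
      unfolding y_def L_def by (simp add: distrib_left right_diff_distrib sum.distrib sum_subtractf sum_distrib_right)
    then have "(\<Sum>j\<in>E. lam i j * y j) = A i \<bullet> x" using l1 Ai by (simp add: inner_sum_left)
    moreover have "E \<noteq> {}" using l1 by auto
    ultimately have "exp (A i \<bullet> x) \<le> (\<Sum>j\<in>E. lam i j * exp (y j))"
      using convex_on_sum[OF _ _ exp_convex, of E "lam i" y] l0 l1 by simp
    then have "h i * exp (A i \<bullet> x) \<ge> h i * (\<Sum>j\<in>E. lam i j * exp (y j))"
      using nonpos[OF i] by (rule mult_left_mono_neg)
    moreover have "V i j * exp (A j \<bullet> x) = - h i * (lam i j * exp (y j))" for j
      unfolding V_def y_def by (simp add: exp_add mult_ac)
    ultimately show ?thesis by (simp add: sum_distrib_left sum_negf)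
  qed
  ultimately show ?thesis unfolding AGE_cover_def by (intro exI[of _ V]) auto
qed

lemma bounded_family_convergent_subseq:
  fixes f :: "nat \<Rightarrow> 'a::finite \<Rightarrow> real"
  assumes "\<And>k a. \<bar>f k a\<bar> \<le> B"
  obtains r g where "strict_mono r" and "\<And>a. (\<lambda>k. f (r k) a) \<longlonglongrightarrow> g a"
proof -
  define W where "W k = (\<chi> a. f k a)" for k
  have "bounded (range W)"
    using assms
    by (intro boundedI[where B = "real CARD('a) * B"])
       (auto intro!: order.trans[OF norm_le_l1_cart] simp: W_def sum_bounded_above)
  then obtain l r where "strict_mono r" "(W \<circ> r) \<longlonglongrightarrow> l"
    using bounded_imp_convergent_subsequence by blast
  then show ?thesis
    using that[of r "\<lambda>a. l $ a"] tendsto_vec_nth unfolding W_def comp_def by fastforce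
qed

lemma AGE_cover_tendsto:
  assumes "\<And>k. AGE_cover A E h (\<delta> k) (Vs k)" and "\<delta> \<longlonglongrightarrow> 0"
    and lim: "\<And>i j. i \<notin> E \<Longrightarrow> j \<in> E \<Longrightarrow> (\<lambda>k. Vs k i j) \<longlonglongrightarrow> V i j"
  shows "AGE_cover A E h 0 V"
proof -
  have "0 \<le> V i j" if "i \<notin> E" "j \<in> E" for i j
    using assms(1) that by (intro LIMSEQ_le_const[OF lim[OF that]]) (auto simp: AGE_cover_def)
  moreover have "(\<Sum>i\<in>-E. V i j) \<le> h j" if "j \<in> E" for j
  proof (rule LIMSEQ_le)
    show "(\<lambda>k. \<Sum>i\<in>-E. Vs k i j) \<longlonglongrightarrow> (\<Sum>i\<in>-E. V i j)" using lim that by (auto intro!: tendsto_sum)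
    show "(\<lambda>k. h j + \<delta> k) \<longlonglongrightarrow> h j" using tendsto_add[OF tendsto_const assms(2)] by simp
  qed (use assms(1) that in \<open>auto simp: AGE_cover_def\<close>)
  moreover have "0 \<le> h i * exp (A i \<bullet> x) + (\<Sum>j\<in>E. V i j * exp (A j \<bullet> x))" if "i \<notin> E" for i x
  proof (rule LIMSEQ_le_const)
    show "(\<lambda>k. h i * exp (A i \<bullet> x) + (\<Sum>j\<in>E. Vs k i j * exp (A j \<bullet> x)))
        \<longlonglongrightarrow> h i * exp (A i \<bullet> x) + (\<Sum>j\<in>E. V i j * exp (A j \<bullet> x))"
      using lim that by (auto intro!: tendsto_intros)
  qed (use assms(1) that in \<open>auto simp: AGE_cover_def\<close>)
  ultimately show ?thesis unfolding AGE_cover_def by auto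
qed

lemma AGE_cover_limit:
  fixes A :: "'i::finite \<Rightarrow> real^'n"
  assumes "\<And>\<delta>. \<delta> > 0 \<Longrightarrow> \<exists>V. AGE_cover A E h \<delta> V"
  shows "\<exists>V. AGE_cover A E h 0 V"
proof -
  define \<delta> where "\<delta> k = inverse (real (Suc k))" for k
  obtain Vs where Vs: "\<And>k. AGE_cover A E h (\<delta> k) (Vs k)"
    using assms[of "\<delta> _"] unfolding \<delta>_def by (metis of_nat_0_less_iff positive_imp_inverse_positive zero_less_Suc)
  define C where "C = (\<Sum>j\<in>UNIV. \<bar>h j\<bar>) + 1"
  define W where "W k p = (if fst p \<notin> E \<and> snd p \<in> E then Vs k (fst p) (snd p) else 0)" for k p
  have "\<bar>W k (i, j)\<bar> \<le> C" for k i j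
  proof (cases "i \<notin> E \<and> j \<in> E")
    case True
    have nonneg: "\<forall>i\<in>-E. 0 \<le> Vs k i j" and "(\<Sum>i\<in>-E. Vs k i j) \<le> h j + \<delta> k"
      using Vs[of k] True unfolding AGE_cover_def by auto
    moreover have "Vs k i j \<le> (\<Sum>i\<in>-E. Vs k i j)" using nonneg True by (intro member_le_sum) auto
    moreover have "\<delta> k \<le> 1" unfolding \<delta>_def by (simp add: inverse_le_1_iff)
    moreover have "\<bar>h j\<bar> \<le> (\<Sum>j\<in>UNIV. \<bar>h j\<bar>)" by (rule member_le_sum) auto
    ultimately show ?thesis using True unfolding W_def C_def by simp
  qed (auto simp: W_def C_def sum_nonneg)
  then obtain r l where r: "strict_mono r" and lim: "\<And>p. (\<lambda>k. W (r k) p) \<longlonglongrightarrow> l p"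
    using bounded_family_convergent_subseq[of W C] by (metis surj_pair)
  have "AGE_cover A E h 0 (\<lambda>i j. l (i, j))"
  proof (rule AGE_cover_tendsto)
    show "AGE_cover A E h (\<delta> (r k)) (Vs (r k))" for k by (rule Vs)
    show "(\<lambda>k. \<delta> (r k)) \<longlonglongrightarrow> 0"
      using LIMSEQ_subseq_LIMSEQ[OF LIMSEQ_inverse_real_of_nat r] unfolding \<delta>_def comp_def .
    show "(\<lambda>k. Vs (r k) i j) \<longlonglongrightarrow> l (i, j)" if "i \<notin> E" "j \<in> E" for i j
      using lim[of "(i, j)"] that unfolding W_def by simp
  qed
  then show ?thesis by blast
qed

lemma C_SAGE_if_AGE_cover:
  fixes A :: "'i::finite \<Rightarrow> real^'n"
  assumes "AGE_cover A E h 0 V"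
  shows "h \<in> C_SAGE A"
proof -
  have V_nonneg: "\<And>i j. i \<notin> E \<Longrightarrow> j \<in> E \<Longrightarrow> 0 \<le> V i j"
    and budget: "\<And>j. j \<in> E \<Longrightarrow> (\<Sum>i\<in>-E. V i j) \<le> h j"
    and AGE_piece: "\<And>i x. i \<notin> E \<Longrightarrow> 0 \<le> h i * exp (A i \<bullet> x) + (\<Sum>j\<in>E. V i j * exp (A j \<bullet> x))"
    using assms unfolding AGE_cover_def by auto
  define g where "g k = (if k \<in> E then (\<lambda>i. if i = k then h k - (\<Sum>i'\<in>-E. V i' k) else 0)
      else (\<lambda>i. (if i = k then h k else 0) + (if i \<in> E then V k i else 0)))" for k
  have "g k \<in> C_AGE A k" for k
  proof (cases "k \<in> E")
    case True
    have "Sig A (g k) x = (h k - (\<Sum>i'\<in>-E. V i' k)) * exp (A k \<bullet> x)" for x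
      unfolding Sig_def g_def using True by (simp add: if_zero_mult_simps)
    then show ?thesis using budget[OF True] True unfolding C_AGE_def C_NNS_def g_def by simp
  next
    case False
    have "Sig A (g k) x = h k * exp (A k \<bullet> x) + (\<Sum>j\<in>E. V k j * exp (A j \<bullet> x))" for x
      unfolding Sig_def g_def using False
      by (simp add: distrib_right sum.distrib if_zero_mult_simps sum.inter_restrict[symmetric])
    then show ?thesis using AGE_piece[OF False] False V_nonneg unfolding C_AGE_def C_NNS_def g_def by auto
  qed
  moreover have "h i = (\<Sum>k\<in>UNIV. g k i)" for i
  proof (cases "i \<in> E")
    case True
    have "(\<Sum>k\<in>UNIV. g k i) = (\<Sum>k\<in>UNIV. (if k = i then h i - (\<Sum>i'\<in>-E. V i' i) else 0) + (if k \<in> -E then V k i else 0))"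
      unfolding g_def using True by (intro sum.cong) auto
    also have "\<dots> = h i"
      using sum.inter_restrict[of UNIV "\<lambda>k. V k i" "-E"] by (simp add: sum.distrib)
    finally show ?thesis by simp
  next
    case False
    then have "(\<Sum>k\<in>UNIV. g k i) = (\<Sum>k\<in>UNIV. if k = i then h i else 0)"
      unfolding g_def by (intro sum.cong) auto
    then show ?thesis by simp
  qed
  ultimately show ?thesis unfolding C_SAGE_def by blast
qed

lemma C_SAGE_if_nonneg_nonpos_nonextremal:
  fixes A :: "'i::finite \<Rightarrow> real^'n"
  assumes "inj A" and "\<not> affine_dependent {A i | i. extremal A i}"
    and nonpos: "\<And>i. \<not> extremal A i \<Longrightarrow> h i \<le> 0"
    and nonneg: "\<And>x. 0 \<le> Sig A h x"
  shows "h \<in> C_SAGE A"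
proof -
  define E where "E = {i. extremal A i}"
  obtain lam where l0: "\<And>i j. extremal A j \<Longrightarrow> 0 \<le> lam i j"
    and l1: "\<And>i. sum (lam i) E = 1" and l2: "\<And>i. A i = (\<Sum>j\<in>E. lam i j *\<^sub>R A j)"
    using barycentric_coordinates_extremal[OF \<open>inj A\<close>] unfolding E_def by blast
  have "\<not> affine_dependent (A ` E)" using assms(2) unfolding E_def by (simp add: setcompr_eq_image)
  then have interpolation: "\<exists>x t. \<forall>j\<in>E. A j \<bullet> x = s j + t" for s
    by (rule exists_affine_interpolation[OF inj_on_subset[OF \<open>inj A\<close> subset_UNIV]])
  have "0 \<le> reduced_sig E lam h s" for s
    by (rule reduced_sig_nonneg[OF interpolation]) (use l1 l2 nonneg in blast)+
  then have "\<exists>V. AGE_cover A E h \<delta> V" if "\<delta> > 0" for \<delta>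
  proof (rule AGE_cover_exists[OF _ that])
    show "(\<forall>j\<in>E. 0 \<le> lam i j) \<and> sum (lam i) E = 1 \<and> A i = (\<Sum>j\<in>E. lam i j *\<^sub>R A j)" for i
      using l0 l1 l2 unfolding E_def by blast
    show "h i \<le> 0" if "i \<notin> E" for i using nonpos that unfolding E_def by simp
  qed
  then obtain V where "AGE_cover A E h 0 V" using AGE_cover_limit by blast
  then show ?thesis by (rule C_SAGE_if_AGE_cover)
qed

lemma Sig_nonneg_if_C_SAGE: "c \<in> C_SAGE A \<Longrightarrow> 0 \<le> Sig A c x"
proof -
  assume "c \<in> C_SAGE A"
  then obtain g where g: "\<forall>k. g k \<in> C_AGE A k" "\<forall>i. c i = (\<Sum>k\<in>UNIV. g k i)"
    unfolding C_SAGE_def by blast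
  have "Sig A c x = (\<Sum>i\<in>UNIV. \<Sum>k\<in>UNIV. g k i * exp (A i \<bullet> x))"
    unfolding Sig_def using g(2) by (simp add: sum_distrib_right)
  also have "\<dots> = (\<Sum>k\<in>UNIV. Sig A (g k) x)"
    unfolding Sig_def by (rule sum.swap)
  also have "\<dots> \<ge> 0" using g(1) unfolding C_AGE_def C_NNS_def by (intro sum_nonneg) auto
  finally show ?thesis .
qed

lemma Sig_shift_constant:
  assumes "A i1 = 0"
  shows "Sig A (\<lambda>i. c i - \<gamma> * (if i = i1 then 1 else 0)) x = Sig A c x - \<gamma>"
  using assms unfolding Sig_def by (simp add: left_diff_distrib sum_subtractf if_zero_mult_simps)

lemma f_SAGE_le_f_star:
  assumes "A i1 = 0"
  shows "f_SAGE A i1 c \<le> f_star A c"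
  unfolding f_SAGE_def f_star_def
proof (intro Sup_least INF_greatest)
  fix y x
  assume "y \<in> {ereal \<gamma> |\<gamma>. (\<lambda>i. c i - \<gamma> * (if i = i1 then 1 else 0)) \<in> C_SAGE A}"
  then obtain \<gamma> where y: "y = ereal \<gamma>" and "(\<lambda>i. c i - \<gamma> * (if i = i1 then 1 else 0)) \<in> C_SAGE A"
    by blast
  then have "0 \<le> Sig A c x - \<gamma>"
    using Sig_nonneg_if_C_SAGE Sig_shift_constant[of A i1, OF assms] by metis
  then show "y \<le> ereal (Sig A c x)" using y by simp
qed

theorem mainTheorem12:
  fixes A :: "'m::finite \<Rightarrow> real^'n" and c :: "'m \<Rightarrow> real" and i1 :: 'm
  assumes "inj A"
    and "A i1 = 0"
    and "\<not> affine_dependent {A i | i. extremal A i}"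
    and "\<And>i. A i \<noteq> 0 \<Longrightarrow> \<not> extremal A i \<Longrightarrow> c i \<le> 0"
  shows "f_SAGE A i1 c = f_star A c \<or>
         (f_SAGE A i1 c < f_star A c \<and> f_star A c < ereal (c i1))"
proof (cases "f_star A c < ereal (c i1)")
  case False
  have upper: "f_star A c \<le> ereal (Sig A c x)" for x unfolding f_star_def by (rule INF_lower) simp
  then obtain F where F: "f_star A c = ereal F" using False by (cases "f_star A c") force+
  define h where "h i = c i - F * (if i = i1 then 1 else 0)" for i
  have "h \<in> C_SAGE A"
  proof (rule C_SAGE_if_nonneg_nonpos_nonextremal[OF assms(1,3)])
    show "h i \<le> 0" if "\<not> extremal A i" for i
      using False F assms(4)[OF _ that] inj_eq[OF assms(1), of i i1] assms(2) unfolding h_def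
      by (cases "i = i1") auto
    show "0 \<le> Sig A h x" for x
      using upper[of x] F Sig_shift_constant[of A i1, OF assms(2)] unfolding h_def by simp
  qed
  then have "f_star A c \<le> f_SAGE A i1 c"
    unfolding F f_SAGE_def h_def by (intro Sup_upper) blast
  then show ?thesis using f_SAGE_le_f_star[of A i1 c, OF assms(2)] by simp
qed (use f_SAGE_le_f_star[of A i1 c, OF assms(2)] in auto)

end
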